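(* Let $T_1, \ldots, T_k$ ($k\ge 2$) be rooted binary phylogenetic $X$-trees and let $F$ be a forest of $T_1$ that yields an agreement forest for $T_1, \ldots, T_k$. Suppose $t_i$ and $t_j$ are two components of $F$, with roots $r$ and $r'$, whose roots form a cycle, i.e. $t_i \to t_j$ and $t_j \to t_i$ are both arcs of $G_F$. Let $e^{a}(F, T_2, \ldots, T_k)$ denote the minimum number of edges that must be removed from $F$ to yield an acyclic agreement forest for $T_1,\dots,T_k$. Then there exist a child edge $e_r$ of $r$ and a child edge $e_{r'}$ of $r'$ in $F$ such that for some $x \in \{r, r'\}$, $$e^{a}(F - \{e_x\}, T_2, \ldots, T_k) = e^{a}(F, T_2, \ldots, T_k) - 1,$$ and consequently $$e^{a}(F - \{e_r, e_{r'}\}, T_2, \ldots, T_k) \leq e^{a}(F, T_2, \ldots, T_k) - 1.$$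
   Context: A rooted binary phylogenetic $X$-tree is a rooted tree whose leaves are bijectively labelled by the finite set $X$, whose root has out-degree 2, and all of whose other internal vertices have in-degree 1 and out-degree 2. For a tree $T$ and $Y \subseteq X$, $T(Y)$ denotes the minimal subtree of $T$ connecting the leaves in $Y$, and $T|Y$ the tree obtained from $T(Y)$ by suppressing vertices of degree 2. A forest of $T_1$ is a graph $F$ obtained from $T_1$ by deleting a set of edges; $F-E$ "yields" the forest obtained by deleting the edge set $E$, discarding components without labelled leaves, and suppressing degree-2 vertices. An agreement forest for $T_1, \ldots, T_k$ is a collection $\{t_1, \ldots, t_n\}$ of rooted binary phylogenetic trees with $L(t_1) \cup \cdots \cup L(t_n) = X$ (disjointly) such that for every tree $T_l$: each $t_m$ equals $T_l|L(t_m)$, and the subtrees $T_l(L(t_m))$, $m=1,\ldots,n$, are pairwise vertex-disjoint. For an agreement forest $F=\{t_1,\dots,t_n\}$, $G_F$ is the directed graph with vertex set $F$ and an arc $t_i \to t_j$ ($i \neq j$) whenever, for some $l \in \{1,\ldots,k\}$, the root of $T_l(L(t_i))$ is an ancestor of the root of $T_l(L(t_j))$. The agreement forest is acyclic if $G_F$ has no directed cycle. *)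

theory Defs
  imports Main
begin

text \<open>A rooted tree on vertex type 'v whose leaves are labelled by elements of type 'x.
  Arcs are directed parent-to-child.\<close>
record ('x, 'v) ptree =
  verts :: "'v set"
  arcs  :: "('v \<times> 'v) set"
  lbl   :: "'x \<Rightarrow> 'v"

definition children :: "('x, 'v) ptree \<Rightarrow> 'v \<Rightarrow> 'v set" where
  "children T v = {w. (v, w) \<in> arcs T}"

definition parents :: "('x, 'v) ptree \<Rightarrow> 'v \<Rightarrow> 'v set" where
  "parents T v = {u. (u, v) \<in> arcs T}"

definition leaves :: "('x, 'v) ptree \<Rightarrow> 'v set" where
  "leaves T = {v \<in> verts T. children T v = {}}"

definition is_root :: "('x, 'v) ptree \<Rightarrow> 'v \<Rightarrow> bool" where
  "is_root T \<rho> \<longleftrightarrow> \<rho> \<in> verts T \<and> parents T \<rho> = {} \<and>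
     (\<forall>v \<in> verts T. (\<rho>, v) \<in> (arcs T)\<^sup>*)"

definition phylo_tree :: "'x set \<Rightarrow> ('x, 'v) ptree \<Rightarrow> bool" where
  "phylo_tree X T \<longleftrightarrow>
     finite (verts T) \<and> arcs T \<subseteq> verts T \<times> verts T \<and> acyclic (arcs T) \<and>
     (\<exists>\<rho>. is_root T \<rho> \<and> card (children T \<rho>) = 2 \<and>
        (\<forall>v \<in> verts T - {\<rho>}. card (parents T v) = 1 \<and>
                                (children T v = {} \<or> card (children T v) = 2))) \<and>
     bij_betw (lbl T) X (leaves T)"

definition clus :: "'x set \<Rightarrow> ('x, 'v) ptree \<Rightarrow> 'v \<Rightarrow> 'x set" where
  "clus X T v = {x \<in> X. (v, lbl T x) \<in> (arcs T)\<^sup>*}"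

text \<open>Root of T(Y), i.e. the lowest common ancestor of the leaves labelled by Y.\<close>
definition lca :: "'x set \<Rightarrow> ('x, 'v) ptree \<Rightarrow> 'x set \<Rightarrow> 'v" where
  "lca X T Y = (THE v. v \<in> verts T \<and> Y \<subseteq> clus X T v \<and>
                  (\<forall>w \<in> verts T. Y \<subseteq> clus X T w \<longrightarrow> (w, v) \<in> (arcs T)\<^sup>*))"

text \<open>Vertex set of the minimal subtree T(Y) connecting the leaves labelled by Y.\<close>
definition span :: "'x set \<Rightarrow> ('x, 'v) ptree \<Rightarrow> 'x set \<Rightarrow> 'v set" where
  "span X T Y = {v \<in> verts T. (lca X T Y, v) \<in> (arcs T)\<^sup>* \<and> clus X T v \<inter> Y \<noteq> {}}"

text \<open>The cluster set of T|Y (a rooted phylogenetic tree is determined up to label-preserving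
  isomorphism by its cluster set).\<close>
definition restr_clusters :: "'x set \<Rightarrow> ('x, 'v) ptree \<Rightarrow> 'x set \<Rightarrow> 'x set set" where
  "restr_clusters X T Y = {clus X T v \<inter> Y | v. v \<in> verts T \<and> clus X T v \<inter> Y \<noteq> {}}"

text \<open>Agreement forest for the trees in Ts (first tree T1 = hd Ts), given by the leaf sets of its
  components; the component with leaf set B is the tree T1|B.\<close>
definition agreement_forest :: "'x set \<Rightarrow> ('x, 'v) ptree list \<Rightarrow> 'x set set \<Rightarrow> bool" where
  "agreement_forest X Ts P \<longleftrightarrow>
     (\<forall>B \<in> P. B \<noteq> {}) \<and> \<Union>P = X \<and>
     (\<forall>B \<in> P. \<forall>B' \<in> P. B \<noteq> B' \<longrightarrow> B \<inter> B' = {}) \<and>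
     (\<forall>T \<in> set Ts. \<forall>B \<in> P. restr_clusters X T B = restr_clusters X (hd Ts) B) \<and>
     (\<forall>T \<in> set Ts. \<forall>B \<in> P. \<forall>B' \<in> P. B \<noteq> B' \<longrightarrow> span X T B \<inter> span X T B' = {})"

definition gf_arc :: "'x set \<Rightarrow> ('x, 'v) ptree list \<Rightarrow> 'x set \<Rightarrow> 'x set \<Rightarrow> bool" where
  "gf_arc X Ts B B' \<longleftrightarrow> B \<noteq> B' \<and> (\<exists>T \<in> set Ts. (lca X T B, lca X T B') \<in> (arcs T)\<^sup>*)"

definition GF :: "'x set \<Rightarrow> ('x, 'v) ptree list \<Rightarrow> 'x set set \<Rightarrow> ('x set \<times> 'x set) set" where
  "GF X Ts P = {(B, B'). B \<in> P \<and> B' \<in> P \<and> gf_arc X Ts B B'}"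

definition acyclic_af :: "'x set \<Rightarrow> ('x, 'v) ptree list \<Rightarrow> 'x set set \<Rightarrow> bool" where
  "acyclic_af X Ts P \<longleftrightarrow> agreement_forest X Ts P \<and> acyclic (GF X Ts P)"

text \<open>A forest of T1 is given by the set D of deleted arcs of T1.  The forest it yields is
  described by the label sets of its components containing labelled leaves (the yielded
  component with leaf set B is T1|B).\<close>
definition yield :: "'x set \<Rightarrow> ('x, 'v) ptree \<Rightarrow> ('v \<times> 'v) set \<Rightarrow> 'x set set" where
  "yield X T1 D = (let R = arcs T1 - D in
     {{x \<in> X. (lbl T1 x, lbl T1 y) \<in> (R \<union> R\<inverse>)\<^sup>*} | y. y \<in> X})"

definition ea :: "'x set \<Rightarrow> ('x, 'v) ptree list \<Rightarrow> ('v \<times> 'v) set \<Rightarrow> nat" where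
  "ea X Ts D = (LEAST n. \<exists>E. E \<subseteq> arcs (hd Ts) - D \<and> card E = n \<and>
                              acyclic_af X Ts (yield X (hd Ts) (D \<union> E)))"

end

theory Submission
  imports Defs
begin

text \<open>A forest of \<open>T1\<close> is encoded by its cut vertices, the heads of its deleted arcs.  Refining an
  acyclic agreement forest by one more cut keeps it an acyclic agreement forest.  Hence it suffices
  to find an optimal set \<open>E\<close> of further deletions containing an edge \<open>e\<close> at one of the two roots:
  deleting \<open>e\<close> lowers \<open>e\<^sup>a\<close> by one, and \<open>E - {e}\<close> still works after deleting any other edge too.

  Start from any optimal \<open>E\<close> and let \<open>r\<close> be the root of \<open>B\<close>.  Unless \<open>E\<close> already contains an arc
  at \<open>r\<close>, either some component of \<open>F - E\<close> inside \<open>B\<close> has leaves below both children of \<open>r\<close>, and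
  then it has the same root as \<open>B\<close> in every tree, or a cut below \<open>r\<close> can be moved up to a child of
  \<open>r\<close> without changing \<open>F - E\<close>.  If the
  first case occurred at both roots, the two components would still form a cycle of \<open>G\<^sub>F\<^sub>-\<^sub>E\<close>.\<close>

section \<open>Rooted phylogenetic trees\<close>

locale phylo =
  fixes X :: "'x set" and T :: "('x, 'v) ptree"
  assumes phylo: "phylo_tree X T"
begin

lemma finite_arcs: "finite (arcs T)"
  using phylo finite_subset[OF _ finite_cartesian_product] unfolding phylo_tree_def by blast

lemma acyclic_arcs: "acyclic (arcs T)"
  using phylo unfolding phylo_tree_def by blast

lemma arc_verts: "(a, b) \<in> arcs T \<Longrightarrow> a \<in> verts T \<and> b \<in> verts T"
  using phylo unfolding phylo_tree_def by blast

lemma obtain_root: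
  obtains \<rho> where "is_root T \<rho>" "card (children T \<rho>) = 2"
    "\<forall>v \<in> verts T - {\<rho>}. card (parents T v) = 1 \<and> (children T v = {} \<or> card (children T v) = 2)"
  using phylo unfolding phylo_tree_def by blast

lemma parent_unique:
  assumes "(p, z) \<in> arcs T" "(q, z) \<in> arcs T"
  shows "p = q"
proof -
  obtain \<rho> where \<rho>: "is_root T \<rho>"
    "\<forall>v \<in> verts T - {\<rho>}. card (parents T v) = 1 \<and> (children T v = {} \<or> card (children T v) = 2)"
    by (rule obtain_root)
  have "z \<noteq> \<rho>" using \<rho>(1) assms(1) unfolding is_root_def parents_def by blast
  then have "card (parents T z) = 1" using \<rho>(2) arc_verts[OF assms(1)] by blast
  moreover have "p \<in> parents T z" "q \<in> parents T z" using assms unfolding parents_def by auto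
  ultimately show ?thesis by (metis card_1_singletonE singletonD)
qed

lemma inj_on_snd_arcs: "inj_on snd (arcs T)"
  using parent_unique by (intro inj_onI) (metis prod.collapse)

lemma proper_desc_not_anc:
  assumes "(a, b) \<in> (arcs T)\<^sup>+" "(b, a) \<in> (arcs T)\<^sup>*"
  shows False
  using assms acyclic_arcs unfolding acyclic_def by (meson trancl_rtrancl_trancl)

lemma desc_antisym:
  assumes "(a, b) \<in> (arcs T)\<^sup>*" "(b, a) \<in> (arcs T)\<^sup>*"
  shows "a = b"
  using assms proper_desc_not_anc by (metis rtrancl_eq_or_trancl)

lemma desc_has_parent:
  assumes "(w, z) \<in> (arcs T)\<^sup>*" "w \<noteq> z"
  obtains p where "(p, z) \<in> arcs T" "(w, p) \<in> (arcs T)\<^sup>*"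
  using assms by (metis rtranclE)

lemma common_desc_comparable:
  assumes "(a, z) \<in> (arcs T)\<^sup>*" "(b, z) \<in> (arcs T)\<^sup>*"
  shows "(a, b) \<in> (arcs T)\<^sup>* \<or> (b, a) \<in> (arcs T)\<^sup>*"
  using assms
proof (induction arbitrary: b rule: rtrancl_induct)
  case base
  then show ?case by blast
next
  case (step y z)
  show ?case
  proof (cases "b = z")
    case True
    then show ?thesis using step by (meson rtrancl.rtrancl_into_rtrancl)
  next
    case False
    obtain p where "(p, z) \<in> arcs T" "(b, p) \<in> (arcs T)\<^sup>*"
      by (rule desc_has_parent[OF step.prems False])
    then show ?thesis using step.IH parent_unique step.hyps(2) by blast
  qed
qed

lemma proper_desc_below_child:
  assumes "(r, w) \<in> (arcs T)\<^sup>+"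
  obtains c where "c \<in> children T r" "(c, w) \<in> (arcs T)\<^sup>*"
  using assms unfolding children_def by (metis mem_Collect_eq tranclD)

lemma siblings_no_common_desc:
  assumes "c \<in> children T r" "d \<in> children T r" "c \<noteq> d"
    and "(c, z) \<in> (arcs T)\<^sup>*" "(d, z) \<in> (arcs T)\<^sup>*"
  shows False
proof -
  have arcs: "(r, c) \<in> arcs T" "(r, d) \<in> arcs T" using assms(1,2) unfolding children_def by auto
  have False if ab: "(a, b) \<in> (arcs T)\<^sup>*" "a \<noteq> b" "(r, a) \<in> arcs T" "(r, b) \<in> arcs T" for a b
  proof -
    obtain p where "(p, b) \<in> arcs T" "(a, p) \<in> (arcs T)\<^sup>*" by (rule desc_has_parent[OF ab(1,2)])
    then show False using parent_unique ab(3,4) proper_desc_not_anc[of r a] by blast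
  qed
  then show False
    using common_desc_comparable[OF assms(4,5)] arcs assms(3) by metis
qed

lemma desc_of_child:
  assumes "children T r = {c, d}" "c \<noteq> d"
    and "(r, w) \<in> (arcs T)\<^sup>+" "(w, z) \<in> (arcs T)\<^sup>*" "(c, z) \<in> (arcs T)\<^sup>*"
  shows "(c, w) \<in> (arcs T)\<^sup>*"
proof -
  obtain c' where c': "c' \<in> children T r" "(c', w) \<in> (arcs T)\<^sup>*"
    using assms(3) by (rule proper_desc_below_child)
  then have "c' = c \<or> c' = d" using assms(1) by blast
  then show ?thesis
    using c' assms siblings_no_common_desc[of c r d z] by (auto intro: rtrancl_trans)
qed

lemma obtain_two_children:
  assumes "v \<in> verts T" "children T v \<noteq> {}"
  obtains c d where "children T v = {c, d}" "c \<noteq> d"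
proof -
  obtain \<rho> where \<rho>: "card (children T \<rho>) = 2"
    "\<forall>v \<in> verts T - {\<rho>}. card (parents T v) = 1 \<and> (children T v = {} \<or> card (children T v) = 2)"
    by (rule obtain_root)
  have "card (children T v) = 2"
  proof (cases "v = \<rho>")
    case False
    then show ?thesis using \<rho>(2) assms by blast
  qed (use \<rho>(1) in simp)
  then show thesis using that by (auto simp: card_2_iff)
qed

lemma lbl_leaf: "x \<in> X \<Longrightarrow> lbl T x \<in> verts T \<and> children T (lbl T x) = {}"
  using phylo unfolding phylo_tree_def bij_betw_def leaves_def by blast

lemma lbl_inj: "x \<in> X \<Longrightarrow> y \<in> X \<Longrightarrow> lbl T x = lbl T y \<Longrightarrow> x = y"
  using phylo unfolding phylo_tree_def bij_betw_def inj_on_def by blast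

lemma childless_desc_eq: "children T v = {} \<Longrightarrow> (v, w) \<in> (arcs T)\<^sup>* \<Longrightarrow> w = v"
  unfolding children_def by (metis converse_rtranclE empty_iff mem_Collect_eq)

lemma leaf_desc_eq: "x \<in> X \<Longrightarrow> (lbl T x, v) \<in> (arcs T)\<^sup>* \<Longrightarrow> v = lbl T x"
  using lbl_leaf childless_desc_eq by blast

lemma leaf_desc_leaf: "x \<in> X \<Longrightarrow> y \<in> X \<Longrightarrow> (lbl T x, lbl T y) \<in> (arcs T)\<^sup>* \<Longrightarrow> x = y"
  using leaf_desc_eq lbl_inj by metis

lemma desc_in_verts: "(c, v) \<in> (arcs T)\<^sup>* \<Longrightarrow> v \<in> verts T \<Longrightarrow> c \<in> verts T"
  by (induction rule: converse_rtrancl_induct) (use arc_verts in blast)+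

lemma clus_anti_mono: "(a, b) \<in> (arcs T)\<^sup>* \<Longrightarrow> clus X T b \<subseteq> clus X T a"
  unfolding clus_def by auto

section \<open>Lowest common ancestors\<close>

lemma lca_unique:
  assumes "v \<in> verts T" "Y \<subseteq> clus X T v"
    and "\<forall>w \<in> verts T. Y \<subseteq> clus X T w \<longrightarrow> (w, v) \<in> (arcs T)\<^sup>*"
  shows "lca X T Y = v"
  unfolding lca_def using assms desc_antisym by (intro the_equality) blast+

lemma lca_exists:
  assumes "Y \<subseteq> X" "Y \<noteq> {}"
  shows "\<exists>v. v \<in> verts T \<and> Y \<subseteq> clus X T v \<and>
             (\<forall>w \<in> verts T. Y \<subseteq> clus X T w \<longrightarrow> (w, v) \<in> (arcs T)\<^sup>*)"
proof -
  obtain \<rho> where \<rho>: "is_root T \<rho>" by (rule obtain_root)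
  define Q where "Q = {w \<in> verts T. Y \<subseteq> clus X T w}"
  have "\<rho> \<in> Q" using \<rho> assms(1) lbl_leaf unfolding Q_def clus_def is_root_def by auto
  have "wf (((arcs T)\<inverse>)\<^sup>+)"
    using finite_acyclic_wf_converse[OF finite_arcs acyclic_arcs] by (rule wf_trancl)
  then have "\<exists>z \<in> Q. \<forall>y. (y, z) \<in> ((arcs T)\<inverse>)\<^sup>+ \<longrightarrow> y \<notin> Q"
    using \<open>\<rho> \<in> Q\<close> unfolding wf_eq_minimal by blast
  then obtain z where z: "z \<in> Q" "\<forall>y. (z, y) \<in> (arcs T)\<^sup>+ \<longrightarrow> y \<notin> Q"
    unfolding trancl_converse by blast
  obtain y where y: "y \<in> Y" using assms by blast
  have "(w, z) \<in> (arcs T)\<^sup>*" if "w \<in> Q" for w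
  proof -
    have "(w, lbl T y) \<in> (arcs T)\<^sup>*" "(z, lbl T y) \<in> (arcs T)\<^sup>*"
      using that z y unfolding Q_def clus_def by auto
    then show ?thesis
      using common_desc_comparable z that by (metis rtrancl_eq_or_trancl)
  qed
  then show ?thesis using z(1) unfolding Q_def by blast
qed

context
  fixes Y assumes Y: "Y \<subseteq> X" "Y \<noteq> {}"
begin

lemma lca_in_verts: "lca X T Y \<in> verts T"
  and lca_clus: "Y \<subseteq> clus X T (lca X T Y)"
  and lca_greatest: "w \<in> verts T \<Longrightarrow> Y \<subseteq> clus X T w \<Longrightarrow> (w, lca X T Y) \<in> (arcs T)\<^sup>*"
  using lca_exists[OF Y] lca_unique by blast+

lemma lca_desc: "y \<in> Y \<Longrightarrow> (lca X T Y, lbl T y) \<in> (arcs T)\<^sup>*"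
  using lca_clus unfolding clus_def by blast

lemma lca_in_span: "lca X T Y \<in> span X T Y"
  using lca_in_verts lca_clus Y(2) unfolding span_def by blast

end

lemma lca_singleton: "x \<in> X \<Longrightarrow> lca X T {x} = lbl T x"
  using lbl_leaf leaf_desc_eq by (intro lca_unique) (auto simp: clus_def)

lemma lca_anti_mono:
  assumes "B1 \<subseteq> B" "B \<subseteq> X" "B1 \<noteq> {}"
  shows "(lca X T B, lca X T B1) \<in> (arcs T)\<^sup>*"
  using assms lca_clus[of B] lca_in_verts[of B] lca_greatest[of B1] by blast

lemma span_mono:
  assumes "B1 \<subseteq> B" "B \<subseteq> X" "B1 \<noteq> {}"
  shows "span X T B1 \<subseteq> span X T B"
  using lca_anti_mono[OF assms] assms(1) unfolding span_def by (auto intro: rtrancl_trans)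

section \<open>Forests of a tree as partitions by cut vertices\<close>

text \<open>Deleting a set \<open>S\<close> of arcs cuts the tree just above the heads \<open>snd ` S\<close>.  Two leaves
  remain connected iff no such cut vertex lies above exactly one of them
  (\<open>yield_eq_cut_blocks\<close>).\<close>

definition cut_equiv :: "'v set \<Rightarrow> 'x \<Rightarrow> 'x \<Rightarrow> bool" where
  "cut_equiv W x y \<longleftrightarrow> (\<forall>w \<in> W. (w, lbl T x) \<in> (arcs T)\<^sup>* \<longleftrightarrow> (w, lbl T y) \<in> (arcs T)\<^sup>*)"

definition cut_blocks :: "'v set \<Rightarrow> 'x set set" where
  "cut_blocks W = {{x \<in> X. cut_equiv W x y} | y. y \<in> X}"

lemma cut_equiv_refl: "cut_equiv W x x"
  and cut_equiv_sym: "cut_equiv W x y \<Longrightarrow> cut_equiv W y x"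
  and cut_equiv_trans: "cut_equiv W x y \<Longrightarrow> cut_equiv W y z \<Longrightarrow> cut_equiv W x z"
  and cut_equiv_anti_mono: "W1 \<subseteq> W2 \<Longrightarrow> cut_equiv W2 x y \<Longrightarrow> cut_equiv W1 x y"
  unfolding cut_equiv_def by blast+

lemma cut_equiv_insert:
  "cut_equiv (insert c W) x y \<longleftrightarrow>
     cut_equiv W x y \<and> ((c, lbl T x) \<in> (arcs T)\<^sup>* \<longleftrightarrow> (c, lbl T y) \<in> (arcs T)\<^sup>*)"
  unfolding cut_equiv_def by blast

lemma cut_block_ne: "K \<in> cut_blocks W \<Longrightarrow> K \<noteq> {}"
  and cut_block_subset: "K \<in> cut_blocks W \<Longrightarrow> K \<subseteq> X"
  and cut_blocks_Union: "\<Union>(cut_blocks W) = X"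
  and cut_class_in_blocks: "x \<in> X \<Longrightarrow> {z \<in> X. cut_equiv W z x} \<in> cut_blocks W"
  unfolding cut_blocks_def using cut_equiv_refl by blast+

lemma cut_block_eq: "K \<in> cut_blocks W \<Longrightarrow> x \<in> K \<Longrightarrow> K = {z \<in> X. cut_equiv W z x}"
  unfolding cut_blocks_def using cut_equiv_sym cut_equiv_trans by blast

lemma cut_block_equiv: "K \<in> cut_blocks W \<Longrightarrow> x \<in> K \<Longrightarrow> y \<in> K \<Longrightarrow> cut_equiv W x y"
  using cut_block_eq by blast

lemma cut_blocks_disjoint: "K \<in> cut_blocks W \<Longrightarrow> K' \<in> cut_blocks W \<Longrightarrow> K \<noteq> K' \<Longrightarrow> K \<inter> K' = {}"
  using cut_block_eq by blast

lemma cut_blocks_cong: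
  assumes "\<And>x y. x \<in> X \<Longrightarrow> y \<in> X \<Longrightarrow> cut_equiv W1 x y \<longleftrightarrow> cut_equiv W2 x y"
  shows "cut_blocks W1 = cut_blocks W2"
proof -
  have "{x \<in> X. cut_equiv W1 x y} = {x \<in> X. cut_equiv W2 x y}" if "y \<in> X" for y
    using assms that by blast
  then show ?thesis unfolding cut_blocks_def by blast
qed

lemma arc_preserves_cut_side:
  assumes "S \<subseteq> arcs T" "(a, b) \<in> arcs T - S" "(u, w) \<in> S"
  shows "(w, a) \<in> (arcs T)\<^sup>* \<longleftrightarrow> (w, b) \<in> (arcs T)\<^sup>*"
proof
  assume "(w, b) \<in> (arcs T)\<^sup>*"
  moreover have "w \<noteq> b" using assms parent_unique by blast
  ultimately obtain p where "(p, b) \<in> arcs T" "(w, p) \<in> (arcs T)\<^sup>*" by (rule desc_has_parent)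
  then show "(w, a) \<in> (arcs T)\<^sup>*" using parent_unique assms(2) by blast
qed (use assms(2) in auto)

lemma path_preserves_cut_side:
  assumes "S \<subseteq> arcs T" "(a, b) \<in> ((arcs T - S) \<union> (arcs T - S)\<inverse>)\<^sup>*" "w \<in> snd ` S"
  shows "(w, a) \<in> (arcs T)\<^sup>* \<longleftrightarrow> (w, b) \<in> (arcs T)\<^sup>*"
  using assms(2)
proof (induction rule: rtrancl_induct)
  case (step y z)
  obtain u where u: "(u, w) \<in> S" using assms(3) by force
  from step.hyps(2) show ?case
    using step.IH arc_preserves_cut_side[OF assms(1) _ u] by blast
qed simp

lemma desc_path_avoiding:
  assumes "(a, z) \<in> (arcs T)\<^sup>*"
    and "\<forall>p c. (p, c) \<in> S \<longrightarrow> (c, z) \<in> (arcs T)\<^sup>* \<longrightarrow> (a, c) \<notin> (arcs T)\<^sup>+"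
  shows "(a, z) \<in> (arcs T - S)\<^sup>*"
  using assms
proof (induction rule: rtrancl_induct)
  case (step y z)
  have "(a, y) \<in> (arcs T - S)\<^sup>*"
    using step.IH step.prems step.hyps(2) by (meson rtrancl.rtrancl_into_rtrancl)
  moreover have "(a, z) \<in> (arcs T)\<^sup>+" using step.hyps by simp
  then have "(y, z) \<notin> S" using step.prems by blast
  ultimately show ?case using step.hyps(2) by (meson Diff_iff rtrancl.rtrancl_into_rtrancl)
qed simp

lemma connected_iff_cut_equiv:
  assumes "S \<subseteq> arcs T" "x \<in> X" "y \<in> X"
  shows "(lbl T x, lbl T y) \<in> ((arcs T - S) \<union> (arcs T - S)\<inverse>)\<^sup>* \<longleftrightarrow> cut_equiv (snd ` S) x y"
proof
  assume "(lbl T x, lbl T y) \<in> ((arcs T - S) \<union> (arcs T - S)\<inverse>)\<^sup>*"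
  then show "cut_equiv (snd ` S) x y"
    unfolding cut_equiv_def using path_preserves_cut_side[OF assms(1)] by blast
next
  assume equiv: "cut_equiv (snd ` S) x y"
  define a where "a = lca X T {x, y}"
  have xy: "{x, y} \<subseteq> X" "{x, y} \<noteq> {}" using assms by auto
  have no_cut_below_a: "(a, c) \<notin> (arcs T)\<^sup>+"
    if "(p, c) \<in> S" "(c, lbl T x) \<in> (arcs T)\<^sup>* \<or> (c, lbl T y) \<in> (arcs T)\<^sup>*" for p c
  proof
    assume "(a, c) \<in> (arcs T)\<^sup>+"
    moreover have "c \<in> snd ` S" using that by force
    then have "{x, y} \<subseteq> clus X T c" using equiv that assms unfolding cut_equiv_def clus_def by auto
    then have "(c, a) \<in> (arcs T)\<^sup>*"
      using lca_greatest[OF xy] arc_verts that(1) assms(1) unfolding a_def by blast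
    ultimately show False by (rule proper_desc_not_anc)
  qed
  have "(a, lbl T x) \<in> (arcs T - S)\<^sup>*" "(a, lbl T y) \<in> (arcs T - S)\<^sup>*"
    using lca_desc[OF xy] desc_path_avoiding no_cut_below_a unfolding a_def by blast+
  then have "(lbl T x, a) \<in> ((arcs T - S)\<inverse>)\<^sup>*" "(a, lbl T y) \<in> (arcs T - S)\<^sup>*"
    by (simp_all add: rtrancl_converse)
  then have "(lbl T x, a) \<in> ((arcs T - S) \<union> (arcs T - S)\<inverse>)\<^sup>*"
    and "(a, lbl T y) \<in> ((arcs T - S) \<union> (arcs T - S)\<inverse>)\<^sup>*"
    by (meson rtrancl_mono[THEN subsetD] sup_ge1 sup_ge2)+
  then show "(lbl T x, lbl T y) \<in> ((arcs T - S) \<union> (arcs T - S)\<inverse>)\<^sup>*" by simp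
qed

lemma yield_eq_cut_blocks: "S \<subseteq> arcs T \<Longrightarrow> yield X T S = cut_blocks (snd ` S)"
  unfolding yield_def cut_blocks_def Let_def using connected_iff_cut_equiv by blast

lemma cut_blocks_all_arcs: "cut_blocks (snd ` arcs T) = {{x} | x. x \<in> X}"
proof -
  obtain \<rho> where \<rho>: "is_root T \<rho>" "card (children T \<rho>) = 2" by (rule obtain_root)
  have leaf_cut: "lbl T z \<in> snd ` arcs T" if "z \<in> X" for z
  proof -
    have "(\<rho>, lbl T z) \<in> (arcs T)\<^sup>*" using \<rho>(1) lbl_leaf[OF that] unfolding is_root_def by blast
    moreover have "\<rho> \<noteq> lbl T z" using \<rho>(2) lbl_leaf[OF that] by auto
    ultimately obtain p where "(p, lbl T z) \<in> arcs T" by (rule desc_has_parent)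
    then show ?thesis by force
  qed
  have "z = x" if "z \<in> X" "x \<in> X" "cut_equiv (snd ` arcs T) z x" for z x
  proof -
    have "(lbl T z, lbl T x) \<in> (arcs T)\<^sup>*"
      using that(3) leaf_cut[OF that(1)] unfolding cut_equiv_def by blast
    then show ?thesis using leaf_desc_leaf that(1,2) by blast
  qed
  then have "{z \<in> X. cut_equiv (snd ` arcs T) z x} = {x}" if "x \<in> X" for x
    using that cut_equiv_refl by blast
  then show ?thesis unfolding cut_blocks_def by auto
qed

definition part_below :: "'v \<Rightarrow> 'x set \<Rightarrow> 'x set" where
  "part_below c K = {x \<in> K. (c, lbl T x) \<in> (arcs T)\<^sup>*}"

definition block_containing :: "'v set \<Rightarrow> 'x set \<Rightarrow> 'x set" where
  "block_containing W K = {x \<in> X. cut_equiv W x (SOME y. y \<in> K)}"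

context
  fixes c W K assumes K: "K \<in> cut_blocks (insert c W)"
begin

lemma block_containing_in_blocks: "block_containing W K \<in> cut_blocks W"
  and block_containing_split:
    "K = {x \<in> block_containing W K. (c, lbl T x) \<in> (arcs T)\<^sup>* \<longleftrightarrow> (c, lbl T (SOME y. y \<in> K)) \<in> (arcs T)\<^sup>*}"
  and subset_block_containing: "K \<subseteq> block_containing W K"
proof -
  have some: "(SOME y. y \<in> K) \<in> K" using cut_block_ne[OF K] by (simp add: some_in_eq)
  then show "block_containing W K \<in> cut_blocks W"
    unfolding block_containing_def using cut_class_in_blocks cut_block_subset[OF K] by blast
  show split: "K = {x \<in> block_containing W K.
      (c, lbl T x) \<in> (arcs T)\<^sup>* \<longleftrightarrow> (c, lbl T (SOME y. y \<in> K)) \<in> (arcs T)\<^sup>*}"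
    using cut_block_eq[OF K some] unfolding block_containing_def cut_equiv_insert by blast
  then show "K \<subseteq> block_containing W K" by blast
qed

end

lemma refined_blocks_split:
  assumes "K1 \<in> cut_blocks (insert c W)" "K2 \<in> cut_blocks (insert c W)" "K1 \<noteq> K2"
    and "block_containing W K1 = block_containing W K2"
  shows "(K1 = part_below c (block_containing W K1) \<and> K2 = block_containing W K1 - K1) \<or>
         (K2 = part_below c (block_containing W K1) \<and> K1 = block_containing W K1 - K2)"
proof -
  let ?K0 = "block_containing W K1" and ?C = "\<lambda>x. (c, lbl T x) \<in> (arcs T)\<^sup>*"
  have "K1 = {x \<in> ?K0. ?C x \<longleftrightarrow> ?C (SOME y. y \<in> K1)}" "K2 = {x \<in> ?K0. ?C x \<longleftrightarrow> ?C (SOME y. y \<in> K2)}"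
    using block_containing_split[OF assms(1)] block_containing_split[OF assms(2)] assms(4) by simp_all
  then show ?thesis
    using assms(3) unfolding part_below_def
    by (cases "?C (SOME y. y \<in> K1)"; cases "?C (SOME y. y \<in> K2)") auto
qed

section \<open>Roots of blocks and exchange of cuts\<close>

lemma straddling_cluster_contains_block:
  assumes B: "B \<subseteq> X" "B \<noteq> {}" and children: "children T (lca X T B) = {c, d}" "c \<noteq> d"
    and x: "x \<in> B" "(c, lbl T x) \<in> (arcs T)\<^sup>*" "(z, lbl T x) \<in> (arcs T)\<^sup>*"
    and y: "(d, lbl T y) \<in> (arcs T)\<^sup>*" "(z, lbl T y) \<in> (arcs T)\<^sup>*"
  shows "B \<subseteq> clus X T z"
proof -
  let ?r = "lca X T B"
  have "(z, ?r) \<in> (arcs T)\<^sup>*"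
  proof (rule ccontr)
    assume "(z, ?r) \<notin> (arcs T)\<^sup>*"
    then have "(?r, z) \<in> (arcs T)\<^sup>+"
      using common_desc_comparable[OF x(3) lca_desc[OF B x(1)]] by (metis rtrancl_eq_or_trancl)
    then obtain c' where c': "c' \<in> children T ?r" "(c', z) \<in> (arcs T)\<^sup>*"
      by (rule proper_desc_below_child)
    have "c \<in> children T ?r" "d \<in> children T ?r" "c' = c \<or> c' = d" using children c'(1) by auto
    then show False
      using siblings_no_common_desc[of c ?r d] children(2) c'(2) x(2,3) y by (meson rtrancl_trans)
  qed
  then show ?thesis using lca_clus[OF B] clus_anti_mono by blast
qed

context
  fixes W B c d
  assumes B: "B \<in> cut_blocks W" and children: "children T (lca X T B) = {c, d}" "c \<noteq> d"
begin

lemma block_meets_child: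
  assumes "a \<in> {c, d}"
  shows "\<exists>x \<in> B. (a, lbl T x) \<in> (arcs T)\<^sup>*"
proof (rule ccontr)
  let ?r = "lca X T B"
  obtain b where ab: "children T ?r = {a, b}" using assms children(1) by blast
  have BX: "B \<subseteq> X" "B \<noteq> {}" using cut_block_subset cut_block_ne B by blast+
  assume none: "\<not> ?thesis"
  have "x \<in> clus X T b" if "x \<in> B" for x
  proof -
    have "?r \<noteq> lbl T x" using ab lbl_leaf that BX by auto
    then have "(?r, lbl T x) \<in> (arcs T)\<^sup>+" using lca_desc[OF BX that] by (metis rtrancl_eq_or_trancl)
    then obtain c' where c': "c' \<in> children T ?r" "(c', lbl T x) \<in> (arcs T)\<^sup>*"
      by (rule proper_desc_below_child)
    then have "c' = b" using ab none that by auto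
    then show ?thesis using c'(2) that BX unfolding clus_def by blast
  qed
  moreover have "(?r, b) \<in> arcs T" using ab unfolding children_def by blast
  ultimately have "(b, ?r) \<in> (arcs T)\<^sup>*" using lca_greatest[OF BX] arc_verts by blast
  then show False using proper_desc_not_anc \<open>(?r, b) \<in> arcs T\<close> by blast
qed

lemma root_children_uncut: "c \<notin> W" "d \<notin> W"
proof -
  obtain x y where "x \<in> B" "(c, lbl T x) \<in> (arcs T)\<^sup>*" "y \<in> B" "(d, lbl T y) \<in> (arcs T)\<^sup>*"
    using block_meets_child by blast
  moreover have "cut_equiv W x y" using cut_block_equiv B calculation by blast
  moreover have "c \<in> children T (lca X T B)" "d \<in> children T (lca X T B)" using children by auto
  ultimately show "c \<notin> W" "d \<notin> W"
    using siblings_no_common_desc children(2) unfolding cut_equiv_def by blast+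
qed

end

definition cut_between :: "'v set \<Rightarrow> 'v \<Rightarrow> 'x \<Rightarrow> bool" where
  "cut_between W r x \<longleftrightarrow> (\<exists>w \<in> W. (r, w) \<in> (arcs T)\<^sup>+ \<and> (w, lbl T x) \<in> (arcs T)\<^sup>*)"

lemma cut_equiv_straddling:
  assumes "(v, lbl T x) \<in> (arcs T)\<^sup>*" "(v, lbl T p) \<in> (arcs T)\<^sup>*"
    and "(v, lbl T y) \<notin> (arcs T)\<^sup>*" "(v, lbl T q) \<notin> (arcs T)\<^sup>*"
    and "cut_equiv W x y" "cut_equiv W p q"
  shows "cut_equiv W x p"
  unfolding cut_equiv_def
proof
  fix w assume "w \<in> W"
  have transfer: "(w, lbl T b) \<in> (arcs T)\<^sup>*"
    if "(w, lbl T a) \<in> (arcs T)\<^sup>*" "(v, lbl T a) \<in> (arcs T)\<^sup>*" "(v, lbl T b) \<in> (arcs T)\<^sup>*"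
      "(v, lbl T a') \<notin> (arcs T)\<^sup>*" "(w, lbl T a') \<in> (arcs T)\<^sup>* \<longleftrightarrow> (w, lbl T a) \<in> (arcs T)\<^sup>*"
    for a b a'
    using common_desc_comparable[OF that(1,2)] that(1,3-5) by (meson rtrancl_trans)
  show "(w, lbl T x) \<in> (arcs T)\<^sup>* \<longleftrightarrow> (w, lbl T p) \<in> (arcs T)\<^sup>*"
    using transfer[of x p y] transfer[of p x q] assms \<open>w \<in> W\<close> unfolding cut_equiv_def by blast
qed

lemma cut_between_on_one_side:
  assumes below_r: "\<forall>x \<in> B. (r, lbl T x) \<in> (arcs T)\<^sup>*"
    and separated: "\<forall>x \<in> B. \<forall>y \<in> B. (c, lbl T x) \<in> (arcs T)\<^sup>* \<longrightarrow> (d, lbl T y) \<in> (arcs T)\<^sup>* \<longrightarrow>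
                      \<not> cut_equiv W x y"
  shows "(\<forall>x \<in> B. (c, lbl T x) \<in> (arcs T)\<^sup>* \<longrightarrow> cut_between W r x) \<or>
         (\<forall>x \<in> B. (d, lbl T x) \<in> (arcs T)\<^sup>* \<longrightarrow> cut_between W r x)"
proof (rule ccontr)
  assume "\<not> ?thesis"
  then obtain x y where x: "x \<in> B" "(c, lbl T x) \<in> (arcs T)\<^sup>*" "\<not> cut_between W r x"
    and y: "y \<in> B" "(d, lbl T y) \<in> (arcs T)\<^sup>*" "\<not> cut_between W r y"
    by blast
  have above_r: "(w, r) \<in> (arcs T)\<^sup>*"
    if "w \<in> W" "(w, lbl T z) \<in> (arcs T)\<^sup>*" "z \<in> B" "\<not> cut_between W r z" for w z
    using common_desc_comparable[of w "lbl T z" r] that below_r unfolding cut_between_def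
    by (metis rtrancl_eq_or_trancl)
  have "cut_equiv W x y"
    unfolding cut_equiv_def using above_r x y below_r by (meson rtrancl_trans)
  then show False using separated x y by blast
qed

context
  fixes r c d :: 'v and WD W :: "'v set" and B :: "'x set" and x0 y0 :: 'x
  assumes children: "children T r = {c, d}" "c \<noteq> d"
    and WD_W: "WD \<subseteq> W"
    and B: "B \<in> cut_blocks WD"
    and x0: "x0 \<in> B" "(c, lbl T x0) \<in> (arcs T)\<^sup>*"
    and y0: "y0 \<in> B" "(d, lbl T y0) \<in> (arcs T)\<^sup>*"
    and c_side_cut: "\<forall>x \<in> B. (c, lbl T x) \<in> (arcs T)\<^sup>* \<longrightarrow> cut_between W r x"
begin

private lemma B_eq: "B = {z \<in> X. cut_equiv WD z x0}"
  using cut_block_eq[OF B x0(1)] .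

private lemma x0_equiv_y0: "cut_equiv WD x0 y0"
  using cut_block_equiv[OF B x0(1) y0(1)] .

private lemma c_not_above_y0: "(c, lbl T y0) \<notin> (arcs T)\<^sup>*"
  using siblings_no_common_desc[of c r d] children y0(2) by blast

lemma obtain_highest_cut_above_x0:
  obtains w0 where "w0 \<in> W" "(r, w0) \<in> (arcs T)\<^sup>+" "(w0, lbl T x0) \<in> (arcs T)\<^sup>*"
    "\<forall>w \<in> W. (r, w) \<in> (arcs T)\<^sup>+ \<longrightarrow> (w, lbl T x0) \<in> (arcs T)\<^sup>* \<longrightarrow> (w, w0) \<notin> (arcs T)\<^sup>+"
proof -
  define Q where "Q = {w \<in> W. (r, w) \<in> (arcs T)\<^sup>+ \<and> (w, lbl T x0) \<in> (arcs T)\<^sup>*}"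
  have "Q \<noteq> {}" using c_side_cut x0 unfolding Q_def cut_between_def by blast
  moreover have "wf ((arcs T)\<^sup>+)"
    using finite_acyclic_wf[OF finite_arcs acyclic_arcs] by (rule wf_trancl)
  ultimately have "\<exists>w0 \<in> Q. \<forall>w. (w, w0) \<in> (arcs T)\<^sup>+ \<longrightarrow> w \<notin> Q"
    unfolding wf_eq_minimal by blast
  then show thesis using that unfolding Q_def by blast
qed

context
  fixes w0 assumes w0: "w0 \<in> W" "(r, w0) \<in> (arcs T)\<^sup>+" "(w0, lbl T x0) \<in> (arcs T)\<^sup>*"
    and highest: "\<forall>w \<in> W. (r, w) \<in> (arcs T)\<^sup>+ \<longrightarrow> (w, lbl T x0) \<in> (arcs T)\<^sup>* \<longrightarrow> (w, w0) \<notin> (arcs T)\<^sup>+"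
begin

private lemma c_above_w0: "(c, w0) \<in> (arcs T)\<^sup>*"
  using desc_of_child[OF children w0(2,3) x0(2)] .

private lemma w0_not_above_y0: "(w0, lbl T y0) \<notin> (arcs T)\<^sup>*"
  using c_above_w0 c_not_above_y0 by (meson rtrancl_trans)

lemma w0_uncut: "w0 \<notin> WD"
  using x0_equiv_y0 w0(3) w0_not_above_y0 unfolding cut_equiv_def by blast

lemma exchanged_cuts_separate_at_w0:
  assumes "p \<in> X" "q \<in> X" "(w0, lbl T p) \<in> (arcs T)\<^sup>*" "(w0, lbl T q) \<notin> (arcs T)\<^sup>*"
  shows "\<not> cut_equiv (insert c (W - {w0})) p q"
proof
  assume equiv: "cut_equiv (insert c (W - {w0})) p q"
  have "(c, lbl T q) \<in> (arcs T)\<^sup>*"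
    using equiv c_above_w0 assms(3) unfolding cut_equiv_def by (meson insertI1 rtrancl_trans)
  moreover have "WD \<subseteq> insert c (W - {w0})" using WD_W w0_uncut by blast
  then have "cut_equiv WD p q" using equiv by (rule cut_equiv_anti_mono)
  then have "cut_equiv WD x0 p"
    using cut_equiv_straddling[OF w0(3) assms(3) w0_not_above_y0 assms(4) x0_equiv_y0] by blast
  then have "cut_equiv WD q x0"
    using \<open>cut_equiv WD p q\<close> by (meson cut_equiv_sym cut_equiv_trans)
  then have "q \<in> B" using B_eq assms(2) by blast
  ultimately obtain wq where wq: "wq \<in> W" "(r, wq) \<in> (arcs T)\<^sup>+" "(wq, lbl T q) \<in> (arcs T)\<^sup>*"
    using c_side_cut unfolding cut_between_def by blast
  then have "wq \<noteq> w0" using assms(4) by blast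
  then have "(wq, lbl T p) \<in> (arcs T)\<^sup>*" using equiv wq unfolding cut_equiv_def by blast
  from common_desc_comparable[OF this assms(3)] show False
  proof
    assume "(wq, w0) \<in> (arcs T)\<^sup>*"
    then have "(wq, w0) \<in> (arcs T)\<^sup>+" "(wq, lbl T x0) \<in> (arcs T)\<^sup>*"
      using \<open>wq \<noteq> w0\<close> w0(3) by (auto simp: rtrancl_eq_or_trancl)
    then show False using highest wq(1,2) by blast
  qed (use wq(3) assms(4) in \<open>meson rtrancl_trans\<close>)
qed

lemma cuts_separate_at_c:
  assumes "p \<in> X" "q \<in> X" "(c, lbl T p) \<in> (arcs T)\<^sup>*" "(c, lbl T q) \<notin> (arcs T)\<^sup>*"
  shows "\<not> cut_equiv W p q"
proof
  assume equiv: "cut_equiv W p q"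
  then have "cut_equiv WD x0 p"
    using cut_equiv_straddling[OF x0(2) assms(3) c_not_above_y0 assms(4) x0_equiv_y0]
      cut_equiv_anti_mono[OF WD_W] by blast
  then have "p \<in> B" using B_eq assms(1) cut_equiv_sym by blast
  then obtain wp where wp: "wp \<in> W" "(r, wp) \<in> (arcs T)\<^sup>+" "(wp, lbl T p) \<in> (arcs T)\<^sup>*"
    using c_side_cut assms(3) unfolding cut_between_def by blast
  then have "(c, wp) \<in> (arcs T)\<^sup>*" using desc_of_child[OF children] assms(3) by blast
  moreover have "(wp, lbl T q) \<in> (arcs T)\<^sup>*" using equiv wp unfolding cut_equiv_def by blast
  ultimately show False using assms(4) by (meson rtrancl_trans)
qed

lemma cut_equiv_exchange:
  assumes "p \<in> X" "q \<in> X"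
  shows "cut_equiv (insert c (W - {w0})) p q \<longleftrightarrow> cut_equiv W p q"
proof
  assume "cut_equiv (insert c (W - {w0})) p q"
  then show "cut_equiv W p q"
    using exchanged_cuts_separate_at_w0[of p q] exchanged_cuts_separate_at_w0[of q p] assms
    unfolding cut_equiv_def by blast
next
  assume "cut_equiv W p q"
  then show "cut_equiv (insert c (W - {w0})) p q"
    using cuts_separate_at_c[of p q] cuts_separate_at_c[of q p] assms
    unfolding cut_equiv_def by blast
qed

end

text \<open>The highest cut \<open>w0\<close> between \<open>r\<close> and \<open>x0\<close> lies below \<open>c\<close>; since every leaf of \<open>B\<close>
  under \<open>c\<close> is already cut off from \<open>r\<close>, moving that cut up to \<open>c\<close> yields the same forest.\<close>

lemma cut_exchange:
  "\<exists>w0 \<in> W - WD. \<forall>p \<in> X. \<forall>q \<in> X. cut_equiv (insert c (W - {w0})) p q \<longleftrightarrow> cut_equiv W p q"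
  using obtain_highest_cut_above_x0 w0_uncut cut_equiv_exchange by (metis Diff_iff)

end

end

section \<open>Agreement forests given by cut vertices of the first tree\<close>

lemma agreement_forest_block_subset: "agreement_forest X Ts P \<Longrightarrow> K \<in> P \<Longrightarrow> K \<subseteq> X"
  and agreement_forest_block_ne: "agreement_forest X Ts P \<Longrightarrow> K \<in> P \<Longrightarrow> K \<noteq> {}"
  and agreement_forest_disjoint:
    "agreement_forest X Ts P \<Longrightarrow> K \<in> P \<Longrightarrow> K' \<in> P \<Longrightarrow> K \<noteq> K' \<Longrightarrow> K \<inter> K' = {}"
  and agreement_forest_restr_clusters: "agreement_forest X Ts P \<Longrightarrow> T \<in> set Ts \<Longrightarrow> K \<in> P \<Longrightarrow>
    restr_clusters X T K = restr_clusters X (hd Ts) K"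
  and agreement_forest_span_disjoint: "agreement_forest X Ts P \<Longrightarrow> T \<in> set Ts \<Longrightarrow> K \<in> P \<Longrightarrow>
    K' \<in> P \<Longrightarrow> K \<noteq> K' \<Longrightarrow> span X T K \<inter> span X T K' = {}"
  by (auto simp: agreement_forest_def)

lemma restr_clusters_subset:
  "B1 \<subseteq> B \<Longrightarrow> restr_clusters X T B1 = {Z \<inter> B1 | Z. Z \<in> restr_clusters X T B \<and> Z \<inter> B1 \<noteq> {}}"
  unfolding restr_clusters_def by blast

locale phylo_family =
  fixes X :: "'x set" and Ts :: "('x, 'v) ptree list"
  assumes phylo_trees: "\<forall>T \<in> set Ts. phylo_tree X T" and Ts_ne: "Ts \<noteq> []"
begin

abbreviation T1 :: "('x, 'v) ptree" where "T1 \<equiv> hd Ts"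

lemma phylo_member: "T \<in> set Ts \<Longrightarrow> phylo X T"
  using phylo_trees by (simp add: phylo_def)

lemma T1_member: "T1 \<in> set Ts"
  using Ts_ne by simp

sublocale T1: phylo X T1
  using phylo_member T1_member .

context
  fixes P K c T
  assumes af: "agreement_forest X Ts P" and K: "K \<in> P" and T: "T \<in> set Ts"
    and halves_ne: "T1.part_below c K \<noteq> {}" "K - T1.part_below c K \<noteq> {}"
begin

interpretation T: phylo X T
  using phylo_member T .

private lemma K_subset: "K \<subseteq> X"
  using agreement_forest_block_subset[OF af K] .

lemma part_below_cluster: "\<exists>v \<in> verts T. T1.part_below c K = clus X T v \<inter> K"
proof -
  obtain x where x: "x \<in> T1.part_below c K" using halves_ne(1) by blast
  then have "c \<in> verts T1"
    using T1.desc_in_verts T1.lbl_leaf K_subset unfolding T1.part_below_def by blast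
  moreover have "T1.part_below c K = clus X T1 c \<inter> K"
    unfolding T1.part_below_def clus_def using K_subset by auto
  ultimately have "T1.part_below c K \<in> restr_clusters X T1 K"
    unfolding restr_clusters_def using halves_ne(1) by blast
  then have "T1.part_below c K \<in> restr_clusters X T K"
    using agreement_forest_restr_clusters[OF af T K] by simp
  then show ?thesis unfolding restr_clusters_def by blast
qed

lemma part_below_lca:
  obtains v where "v \<in> verts T" "T1.part_below c K = clus X T v \<inter> K"
    "(v, lca X T (T1.part_below c K)) \<in> (arcs T)\<^sup>*"
proof -
  obtain v where v: "v \<in> verts T" "T1.part_below c K = clus X T v \<inter> K"
    using part_below_cluster by blast
  have "T1.part_below c K \<subseteq> X" using K_subset unfolding T1.part_below_def by blast
  moreover have "T1.part_below c K \<subseteq> clus X T v" using v(2) by blast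
  ultimately have "(v, lca X T (T1.part_below c K)) \<in> (arcs T)\<^sup>*"
    using T.lca_greatest halves_ne(1) v(1) by blast
  with v show thesis by (rule that)
qed

lemma halves_span_disjoint: "span X T (T1.part_below c K) \<inter> span X T (K - T1.part_below c K) = {}"
proof -
  obtain v where v: "T1.part_below c K = clus X T v \<inter> K"
    "(v, lca X T (T1.part_below c K)) \<in> (arcs T)\<^sup>*"
    by (rule part_below_lca)
  have "clus X T z \<subseteq> clus X T v" if "z \<in> span X T (T1.part_below c K)" for z
  proof -
    have "(v, z) \<in> (arcs T)\<^sup>*" using that v(2) unfolding span_def by (blast intro: rtrancl_trans)
    then show ?thesis by (rule T.clus_anti_mono)
  qed
  then show ?thesis using v(1) unfolding span_def by blast
qed

lemma halves_lca_not_desc: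
  "(lca X T (T1.part_below c K), lca X T (K - T1.part_below c K)) \<notin> (arcs T)\<^sup>*"
proof
  assume desc: "(lca X T (T1.part_below c K), lca X T (K - T1.part_below c K)) \<in> (arcs T)\<^sup>*"
  obtain v where v: "T1.part_below c K = clus X T v \<inter> K"
    "(v, lca X T (T1.part_below c K)) \<in> (arcs T)\<^sup>*"
    by (rule part_below_lca)
  have "K - T1.part_below c K \<subseteq> clus X T (lca X T (K - T1.part_below c K))"
    using T.lca_clus[of "K - T1.part_below c K"] K_subset halves_ne(2) by blast
  also have "\<dots> \<subseteq> clus X T v" using T.clus_anti_mono[OF rtrancl_trans[OF v(2) desc]] .
  finally show False using v(1) halves_ne(2) by blast
qed

end

lemma lca_desc_lift:
  assumes af: "agreement_forest X Ts P" and K: "K1 \<in> P" "K2 \<in> P" "K1 \<noteq> K2"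
    and sub: "b \<subseteq> K1" "d \<subseteq> K2" "b \<noteq> {}" "d \<noteq> {}" and T: "T \<in> set Ts"
    and desc: "(lca X T b, lca X T d) \<in> (arcs T)\<^sup>*"
  shows "(lca X T K1, lca X T K2) \<in> (arcs T)\<^sup>*"
proof -
  interpret T: phylo X T using phylo_member T .
  have KX: "K1 \<subseteq> X" "K2 \<subseteq> X" using agreement_forest_block_subset af K by blast+
  have K1_d: "(lca X T K1, lca X T d) \<in> (arcs T)\<^sup>*"
    using rtrancl_trans[OF T.lca_anti_mono[of b K1] desc] sub KX by blast
  have K2_d: "(lca X T K2, lca X T d) \<in> (arcs T)\<^sup>*" using T.lca_anti_mono[of d K2] sub KX by blast
  from T.common_desc_comparable[OF K1_d K2_d] show ?thesis
  proof
    assume K2_K1: "(lca X T K2, lca X T K1) \<in> (arcs T)\<^sup>*"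
    have "d \<subseteq> clus X T (lca X T K1)"
      using T.lca_clus[of d] T.clus_anti_mono[OF K1_d] sub KX by (meson order_trans)
    then have "clus X T (lca X T K1) \<inter> K2 \<noteq> {}" using sub(2,4) by blast
    then have "lca X T K1 \<in> span X T K2"
      unfolding span_def using K2_K1 T.lca_in_verts[OF KX(1) agreement_forest_block_ne[OF af K(1)]]
      by blast
    moreover have "lca X T K1 \<in> span X T K1"
      using T.lca_in_span[OF KX(1) agreement_forest_block_ne[OF af K(1)]] .
    ultimately show ?thesis using agreement_forest_span_disjoint[OF af T K] by blast
  qed
qed

section \<open>Refining an agreement forest by one more cut\<close>

context
  fixes W :: "'v set" and c :: 'v
  assumes af: "agreement_forest X Ts (T1.cut_blocks W)"
begin

lemma refined_span_disjoint:
  assumes T: "T \<in> set Ts"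
    and K: "K1 \<in> T1.cut_blocks (insert c W)" "K2 \<in> T1.cut_blocks (insert c W)" "K1 \<noteq> K2"
  shows "span X T K1 \<inter> span X T K2 = {}"
proof -
  interpret T: phylo X T using phylo_member T .
  let ?K0 = "T1.block_containing W K1"
  have ne: "K1 \<noteq> {}" "K2 \<noteq> {}" using T1.cut_block_ne K by blast+
  show ?thesis
  proof (cases "?K0 = T1.block_containing W K2")
    case False
    have "span X T K1 \<subseteq> span X T ?K0" "span X T K2 \<subseteq> span X T (T1.block_containing W K2)"
      using T.span_mono T1.subset_block_containing T1.block_containing_in_blocks T1.cut_block_subset
        K ne by meson+
    then show ?thesis
      using agreement_forest_span_disjoint[OF af T _ _ False] T1.block_containing_in_blocks K by blast
  next
    case True
    have K0: "?K0 \<in> T1.cut_blocks W" using T1.block_containing_in_blocks K(1) .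
    from T1.refined_blocks_split[OF K True] show ?thesis
    proof (elim disjE conjE)
      assume halves: "K1 = T1.part_below c ?K0" "K2 = ?K0 - K1"
      then have "T1.part_below c ?K0 \<noteq> {}" "?K0 - T1.part_below c ?K0 \<noteq> {}" using ne by auto
      from halves_span_disjoint[OF af K0 T this] show ?thesis using halves by simp
    next
      assume halves: "K2 = T1.part_below c ?K0" "K1 = ?K0 - K2"
      then have "T1.part_below c ?K0 \<noteq> {}" "?K0 - T1.part_below c ?K0 \<noteq> {}" using ne by auto
      from halves_span_disjoint[OF af K0 T this] show ?thesis using halves by (simp add: Int_commute)
    qed
  qed
qed

lemma agreement_forest_insert_cut: "agreement_forest X Ts (T1.cut_blocks (insert c W))"
proof -
  have "restr_clusters X T K = restr_clusters X T1 K"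
    if "T \<in> set Ts" "K \<in> T1.cut_blocks (insert c W)" for T K
    using agreement_forest_restr_clusters[OF af that(1) T1.block_containing_in_blocks[OF that(2)]]
      restr_clusters_subset[OF T1.subset_block_containing[OF that(2)], of X T]
      restr_clusters_subset[OF T1.subset_block_containing[OF that(2)], of X T1] by simp
  then show ?thesis
    unfolding agreement_forest_def
    using T1.cut_block_ne T1.cut_blocks_Union T1.cut_blocks_disjoint refined_span_disjoint by blast
qed

lemma GF_insert_cut_arc:
  assumes "(a, b) \<in> GF X Ts (T1.cut_blocks (insert c W))"
  shows "(T1.block_containing W a, T1.block_containing W b) \<in> GF X Ts (T1.cut_blocks W) \<or>
         (T1.block_containing W a = T1.block_containing W b \<and>
          T1.part_below c a = {} \<and> T1.part_below c b = b)"
proof -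
  let ?p = "T1.block_containing W"
  have ab: "a \<in> T1.cut_blocks (insert c W)" "b \<in> T1.cut_blocks (insert c W)" "a \<noteq> b"
    and "\<exists>T \<in> set Ts. (lca X T a, lca X T b) \<in> (arcs T)\<^sup>*"
    using assms unfolding GF_def gf_arc_def by blast+
  then obtain T where T: "T \<in> set Ts" "(lca X T a, lca X T b) \<in> (arcs T)\<^sup>*" by blast
  have blocks: "?p a \<in> T1.cut_blocks W" "?p b \<in> T1.cut_blocks W"
    using T1.block_containing_in_blocks ab by blast+
  have ne: "a \<noteq> {}" "b \<noteq> {}" using T1.cut_block_ne ab by blast+
  show ?thesis
  proof (cases "?p a = ?p b")
    case False
    have "(lca X T (?p a), lca X T (?p b)) \<in> (arcs T)\<^sup>*"
      using lca_desc_lift[OF af blocks False T1.subset_block_containing[OF ab(1)]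
          T1.subset_block_containing[OF ab(2)] ne T] .
    then show ?thesis unfolding GF_def gf_arc_def using blocks False T(1) by blast
  next
    case True
    from T1.refined_blocks_split[OF ab True] show ?thesis
    proof (elim disjE conjE)
      assume halves: "a = T1.part_below c (?p a)" "b = ?p a - a"
      then have "T1.part_below c (?p a) \<noteq> {}" "?p a - T1.part_below c (?p a) \<noteq> {}" using ne by auto
      from halves_lca_not_desc[OF af blocks(1) T(1) this]
      have "(lca X T a, lca X T b) \<notin> (arcs T)\<^sup>*" using halves by simp
      then show ?thesis using T by blast
    next
      assume "b = T1.part_below c (?p a)" "a = ?p a - b"
      then have "T1.part_below c a = {}" "T1.part_below c b = b"
        unfolding T1.part_below_def by blast+
      then show ?thesis using True by blast
    qed
  qed
qed

lemma GF_insert_cut_path: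
  assumes "(a, b) \<in> (GF X Ts (T1.cut_blocks (insert c W)))\<^sup>+"
  shows "(T1.block_containing W a, T1.block_containing W b) \<in> (GF X Ts (T1.cut_blocks W))\<^sup>+ \<or>
         (T1.block_containing W a = T1.block_containing W b \<and>
          T1.part_below c a = {} \<and> T1.part_below c b = b)"
  using assms
proof (induction rule: trancl_induct)
  case (base b)
  then show ?case using GF_insert_cut_arc by blast
next
  case (step b b')
  have "b \<noteq> {}" using step.hyps(2) T1.cut_block_ne unfolding GF_def by blast
  then have "T1.part_below c b \<noteq> {} \<or> T1.part_below c b \<noteq> b" by blast
  with GF_insert_cut_arc[OF step.hyps(2)] step.IH show ?case by (auto intro: trancl_into_trancl)
qed

text \<open>Arcs between the two halves of a split block only lead into the half below \<open>c\<close>, so a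
  cycle in the refined graph would project to a cycle in the coarse one.\<close>

lemma acyclic_GF_insert_cut:
  assumes "acyclic (GF X Ts (T1.cut_blocks W))"
  shows "acyclic (GF X Ts (T1.cut_blocks (insert c W)))"
  unfolding acyclic_def
proof (intro allI notI)
  fix a assume cycle: "(a, a) \<in> (GF X Ts (T1.cut_blocks (insert c W)))\<^sup>+"
  then have "a \<in> T1.cut_blocks (insert c W)"
    unfolding GF_def by (induction rule: trancl.induct) auto
  then have "a \<noteq> {}" by (rule T1.cut_block_ne)
  then show False using GF_insert_cut_path[OF cycle] assms unfolding acyclic_def by blast
qed

end

lemma acyclic_af_insert_cut:
  "acyclic_af X Ts (T1.cut_blocks W) \<Longrightarrow> acyclic_af X Ts (T1.cut_blocks (insert c W))"
  unfolding acyclic_af_def using agreement_forest_insert_cut acyclic_GF_insert_cut by blast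

section \<open>Optimal deletions\<close>

definition optimal_deletion :: "('v \<times> 'v) set \<Rightarrow> ('v \<times> 'v) set \<Rightarrow> bool" where
  "optimal_deletion D E \<longleftrightarrow>
     E \<subseteq> arcs T1 - D \<and> card E = ea X Ts D \<and> acyclic_af X Ts (yield X T1 (D \<union> E))"

lemma acyclic_af_singletons: "acyclic_af X Ts {{x} | x. x \<in> X}"
proof -
  let ?P = "{{x} | x. x \<in> X}"
  have span_singleton: "span X T {x} \<subseteq> {lbl T x}" if "T \<in> set Ts" "x \<in> X" for T x
  proof -
    interpret T: phylo X T using phylo_member that(1) .
    show ?thesis unfolding span_def T.lca_singleton[OF that(2)] by (auto dest: T.leaf_desc_eq[OF that(2)])
  qed
  have "restr_clusters X T {x} = {{x}}" if "T \<in> set Ts" "x \<in> X" for T x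
  proof -
    interpret T: phylo X T using phylo_member that(1) .
    have "lbl T x \<in> verts T" "x \<in> clus X T (lbl T x)"
      using T.lbl_leaf that(2) unfolding clus_def by auto
    then show ?thesis unfolding restr_clusters_def by blast
  qed
  moreover have "span X T B \<inter> span X T B' = {}"
    if T: "T \<in> set Ts" and B: "B \<in> ?P" "B' \<in> ?P" "B \<noteq> B'" for T B B'
  proof -
    interpret T: phylo X T using phylo_member T .
    obtain x y where "B = {x}" "B' = {y}" "x \<in> X" "y \<in> X" "x \<noteq> y" using B by blast
    then show ?thesis using span_singleton[OF T] T.lbl_inj by blast
  qed
  ultimately have "agreement_forest X Ts ?P"
    unfolding agreement_forest_def using T1_member by auto
  moreover have False if arc: "(B, B') \<in> GF X Ts ?P" for B B'
  proof -
    obtain x y where xy: "B = {x}" "B' = {y}" "x \<in> X" "y \<in> X" "x \<noteq> y"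
      using arc unfolding GF_def gf_arc_def by blast
    obtain T where T: "T \<in> set Ts" "(lca X T B, lca X T B') \<in> (arcs T)\<^sup>*"
      using arc unfolding GF_def gf_arc_def by blast
    interpret T: phylo X T using phylo_member T(1) .
    show False using T(2) T.lca_singleton T.leaf_desc_leaf xy by metis
  qed
  then have "GF X Ts ?P = {}" by auto
  ultimately show ?thesis unfolding acyclic_af_def acyclic_def by simp
qed

lemma ea_le_card:
  "E \<subseteq> arcs T1 - D \<Longrightarrow> acyclic_af X Ts (yield X T1 (D \<union> E)) \<Longrightarrow> ea X Ts D \<le> card E"
  unfolding ea_def by (rule Least_le) blast

lemma optimal_deletion_exists:
  assumes "D \<subseteq> arcs T1"
  shows "\<exists>E. optimal_deletion D E"
proof -
  have "D \<union> (arcs T1 - D) = arcs T1" using assms by blast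
  then have "yield X T1 (D \<union> (arcs T1 - D)) = {{x} | x. x \<in> X}"
    using T1.yield_eq_cut_blocks[of "arcs T1"] T1.cut_blocks_all_arcs by simp
  then have "\<exists>n E. E \<subseteq> arcs T1 - D \<and> card E = n \<and> acyclic_af X Ts (yield X T1 (D \<union> E))"
    using acyclic_af_singletons by auto
  then show ?thesis unfolding optimal_deletion_def ea_def by (rule LeastI_ex)
qed

context
  fixes D E e
  assumes D: "D \<subseteq> arcs T1" and E: "optimal_deletion D E" and e: "e \<in> E"
begin

private lemma finite_E: "finite E"
  using E T1.finite_arcs finite_subset unfolding optimal_deletion_def by blast

private lemma card_optimal_remove: "card (E - {e}) + 1 = ea X Ts D"
proof -
  have "card E > 0" using finite_E e card_gt_0_iff by blast
  then show ?thesis using E e finite_E unfolding optimal_deletion_def by (simp add: card_Diff_singleton)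
qed

lemma ea_insert_optimal_edge: "ea X Ts (D \<union> {e}) + 1 = ea X Ts D"
proof -
  have sub: "E \<subseteq> arcs T1 - D" "e \<in> arcs T1 - D" using E e unfolding optimal_deletion_def by blast+
  have "D \<union> {e} \<union> (E - {e}) = D \<union> E" using e by blast
  then have "acyclic_af X Ts (yield X T1 (D \<union> {e} \<union> (E - {e})))"
    using E unfolding optimal_deletion_def by simp
  moreover have "E - {e} \<subseteq> arcs T1 - (D \<union> {e})" using sub(1) by blast
  ultimately have "ea X Ts (D \<union> {e}) \<le> card (E - {e})" by (intro ea_le_card)
  then have upper: "ea X Ts (D \<union> {e}) + 1 \<le> ea X Ts D" using card_optimal_remove by simp
  have "D \<union> {e} \<subseteq> arcs T1" using D sub(2) by blast
  then obtain E2 where E2: "optimal_deletion (D \<union> {e}) E2"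
    using optimal_deletion_exists by blast
  then have "finite E2" using T1.finite_arcs finite_subset unfolding optimal_deletion_def by blast
  have "D \<union> insert e E2 = D \<union> {e} \<union> E2" by blast
  then have "ea X Ts D \<le> card (insert e E2)"
    using ea_le_card[of "insert e E2" D] E2 sub(2) unfolding optimal_deletion_def by auto
  also have "\<dots> \<le> ea X Ts (D \<union> {e}) + 1"
    using E2 \<open>finite E2\<close> unfolding optimal_deletion_def by (simp add: card_insert_if)
  finally show ?thesis using upper by simp
qed

lemma ea_insert_optimal_edge_and_arc:
  assumes e': "e' \<in> arcs T1 - D"
  shows "ea X Ts (D \<union> {e, e'}) + 1 \<le> ea X Ts D"
proof -
  have sub: "D \<union> E \<subseteq> arcs T1" "insert e' (D \<union> E) \<subseteq> arcs T1"
    using D E e' unfolding optimal_deletion_def by blast+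
  have "acyclic_af X Ts (T1.cut_blocks (snd ` (D \<union> E)))"
    using E T1.yield_eq_cut_blocks[OF sub(1)] unfolding optimal_deletion_def by simp
  then have "acyclic_af X Ts (T1.cut_blocks (insert (snd e') (snd ` (D \<union> E))))"
    by (rule acyclic_af_insert_cut)
  moreover have "D \<union> {e, e'} \<union> (E - {e, e'}) = insert e' (D \<union> E)" using e by blast
  ultimately have "acyclic_af X Ts (yield X T1 (D \<union> {e, e'} \<union> (E - {e, e'})))"
    using T1.yield_eq_cut_blocks[OF sub(2)] by simp
  then have "ea X Ts (D \<union> {e, e'}) \<le> card (E - {e, e'})"
    using ea_le_card[of "E - {e, e'}"] E unfolding optimal_deletion_def by blast
  also have "\<dots> \<le> card (E - {e})" using finite_E by (intro card_mono) auto
  finally show ?thesis using card_optimal_remove by simp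
qed

end

section \<open>Optimal deletions at the roots of a cycle\<close>

lemma gf_arc_source_root_not_leaf:
  assumes af: "agreement_forest X Ts P" and B: "B \<in> P" "B' \<in> P" and arc: "gf_arc X Ts B B'"
  shows "children T1 (lca X T1 B) \<noteq> {}"
proof
  assume childless: "children T1 (lca X T1 B) = {}"
  have BX: "B \<subseteq> X" "B' \<subseteq> X" "B \<noteq> {}" "B' \<noteq> {}"
    using agreement_forest_block_subset[OF af] agreement_forest_block_ne[OF af] B by blast+
  obtain x0 where x0: "x0 \<in> B" using BX by blast
  have lbl_root: "lbl T1 x = lca X T1 B" if "x \<in> B" for x
    using T1.childless_desc_eq[OF childless T1.lca_desc[OF BX(1,3) that]] .
  have "x = x0" if "x \<in> B" for x
    using T1.lbl_inj[of x x0] lbl_root[OF that] lbl_root[OF x0] that x0 BX(1) by (simp add: subset_iff)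
  then have single: "B = {x0}" using x0 by blast
  obtain T where T: "T \<in> set Ts" "(lca X T B, lca X T B') \<in> (arcs T)\<^sup>*" and "B \<noteq> B'"
    using arc unfolding gf_arc_def by blast
  interpret T: phylo X T using phylo_member T(1) .
  have "x0 \<in> X" using x0 BX by blast
  then have "lca X T B = lbl T x0" using T.lca_singleton single by simp
  then have "(lbl T x0, lca X T B') \<in> (arcs T)\<^sup>*" using T(2) by simp
  then have lca_B': "lca X T B' = lbl T x0" by (rule T.leaf_desc_eq[OF \<open>x0 \<in> X\<close>])
  have "z = x0" if "z \<in> B'" for z
  proof -
    have "(lbl T x0, lbl T z) \<in> (arcs T)\<^sup>*" using T.lca_desc[OF BX(2,4) that] lca_B' by simp
    then show ?thesis using T.leaf_desc_leaf \<open>x0 \<in> X\<close> BX(2) that by (metis subsetD)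
  qed
  then have "B' \<subseteq> B" using single by blast
  then show False using agreement_forest_disjoint[OF af B \<open>B \<noteq> B'\<close>] BX(4) by blast
qed

lemma gf_arc_root_children:
  assumes af: "agreement_forest X Ts P" and B: "B \<in> P" "B' \<in> P" and arc: "gf_arc X Ts B B'"
  obtains c d where "children T1 (lca X T1 B) = {c, d}" "c \<noteq> d"
proof (rule T1.obtain_two_children)
  show "lca X T1 B \<in> verts T1"
    using T1.lca_in_verts agreement_forest_block_subset[OF af B(1)] agreement_forest_block_ne[OF af B(1)] .
  show "children T1 (lca X T1 B) \<noteq> {}" using gf_arc_source_root_not_leaf[OF assms] .
qed (rule that)

text \<open>A cluster of \<open>T1|B\<close> meeting both sides of the root of \<open>B\<close> is \<open>B\<close> itself; since \<open>T|B\<close> has the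
  same clusters, \<open>B0\<close> and \<open>B\<close> have the same root in \<open>T\<close>.\<close>

lemma lca_straddling_subset_eq:
  assumes af: "agreement_forest X Ts P" and B: "B \<in> P"
    and children: "children T1 (lca X T1 B) = {c, d}" "c \<noteq> d"
    and B0: "B0 \<subseteq> B" "x \<in> B0" "(c, lbl T1 x) \<in> (arcs T1)\<^sup>*" "y \<in> B0" "(d, lbl T1 y) \<in> (arcs T1)\<^sup>*"
    and T: "T \<in> set Ts"
  shows "lca X T B0 = lca X T B"
proof -
  interpret T: phylo X T using phylo_member T .
  let ?u = "lca X T B0"
  have BX: "B \<subseteq> X" "B \<noteq> {}" "B0 \<subseteq> X" "B0 \<noteq> {}"
    using agreement_forest_block_subset[OF af B] B0 by blast+
  have B0_u: "B0 \<subseteq> clus X T ?u" using T.lca_clus[OF BX(3,4)] .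
  then have "clus X T ?u \<inter> B \<in> restr_clusters X T B"
    unfolding restr_clusters_def using T.lca_in_verts[OF BX(3,4)] B0 by blast
  then obtain z where z: "clus X T ?u \<inter> B = clus X T1 z \<inter> B"
    using agreement_forest_restr_clusters[OF af T B] unfolding restr_clusters_def by auto
  then have "(z, lbl T1 x) \<in> (arcs T1)\<^sup>*" "(z, lbl T1 y) \<in> (arcs T1)\<^sup>*"
    using B0_u B0 unfolding clus_def by blast+
  then have "B \<subseteq> clus X T1 z"
    using T1.straddling_cluster_contains_block[OF BX(1,2) children] B0 by blast
  then have "(?u, lca X T B) \<in> (arcs T)\<^sup>*"
    using z T.lca_greatest[OF BX(1,2)] T.lca_in_verts[OF BX(3,4)] by blast
  then show ?thesis using T.lca_anti_mono[OF B0(1) BX(1,4)] T.desc_antisym by blast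
qed

lemma optimal_deletion_exchange:
  assumes D: "D \<subseteq> arcs T1" and E: "optimal_deletion D E"
    and rs: "(r, s) \<in> arcs T1 - D" "s \<notin> snd ` (D \<union> E)"
    and w0: "w0 \<in> snd ` (D \<union> E) - snd ` D"
    and equiv: "\<forall>p \<in> X. \<forall>q \<in> X.
      T1.cut_equiv (insert s (snd ` (D \<union> E) - {w0})) p q \<longleftrightarrow> T1.cut_equiv (snd ` (D \<union> E)) p q"
  shows "\<exists>E'. optimal_deletion D E' \<and> (r, s) \<in> E'"
proof -
  have E_arcs: "E \<subseteq> arcs T1 - D" using E unfolding optimal_deletion_def by blast
  obtain e0 where e0: "e0 \<in> D \<union> E" "w0 = snd e0" using w0 by blast
  then have "e0 \<notin> D" using w0 by blast
  define E' where "E' = insert (r, s) (E - {e0})"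
  have "finite E" using E_arcs T1.finite_arcs finite_subset by blast
  moreover have "(r, s) \<notin> E" using rs(2) by force
  ultimately have "card E' = card E"
    unfolding E'_def using card_Suc_Diff1[of E e0] e0(1) \<open>e0 \<notin> D\<close> by simp
  have arcs: "D \<union> E' \<subseteq> arcs T1" "D \<union> E \<subseteq> arcs T1" "E' \<subseteq> arcs T1 - D"
    using D E_arcs rs(1) unfolding E'_def by blast+
  have "D \<union> E' = insert (r, s) ((D \<union> E) - {e0})" unfolding E'_def using \<open>e0 \<notin> D\<close> by blast
  moreover have "snd ` ((D \<union> E) - {e0}) = snd ` (D \<union> E) - {w0}"
    using inj_on_image_set_diff[OF T1.inj_on_snd_arcs, of "D \<union> E" "{e0}"] arcs(2) e0 by auto
  ultimately have "yield X T1 (D \<union> E') = T1.cut_blocks (insert s (snd ` (D \<union> E) - {w0}))"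
    using T1.yield_eq_cut_blocks[OF arcs(1)] by simp
  also have "\<dots> = T1.cut_blocks (snd ` (D \<union> E))"
    using equiv by (intro T1.cut_blocks_cong) blast
  also have "\<dots> = yield X T1 (D \<union> E)"
    using T1.yield_eq_cut_blocks[OF arcs(2)] by simp
  finally have "optimal_deletion D E'"
    using E arcs(3) \<open>card E' = card E\<close> unfolding optimal_deletion_def by simp
  then show ?thesis unfolding E'_def by blast
qed

lemma root_child_arc:
  assumes D: "D \<subseteq> arcs T1" and B: "B \<in> yield X T1 D"
    and children: "children T1 (lca X T1 B) = {c, d}" "c \<noteq> d" and a: "a \<in> {c, d}"
  shows "(lca X T1 B, a) \<in> arcs T1 - D"
proof -
  have "B \<in> T1.cut_blocks (snd ` D)" using B T1.yield_eq_cut_blocks[OF D] by simp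
  then have "a \<notin> snd ` D" using T1.root_children_uncut children a by blast
  then show ?thesis using children a unfolding children_def by force
qed

lemma gf_arc_root_arc:
  assumes "D \<subseteq> arcs T1" "agreement_forest X Ts (yield X T1 D)"
    and "B \<in> yield X T1 D" "B' \<in> yield X T1 D" "gf_arc X Ts B B'"
  obtains c where "(lca X T1 B, c) \<in> arcs T1 - D"
proof -
  obtain c d where "children T1 (lca X T1 B) = {c, d}" "c \<noteq> d"
    using gf_arc_root_children[OF assms(2-5)] .
  from root_child_arc[OF assms(1,3) this, of c] show thesis by (simp add: that)
qed

context
  fixes D E B c d
  assumes D: "D \<subseteq> arcs T1" and af: "agreement_forest X Ts (yield X T1 D)"
    and B: "B \<in> yield X T1 D"
    and children: "children T1 (lca X T1 B) = {c, d}" "c \<noteq> d"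
    and E: "optimal_deletion D E"
begin

private lemma B_cut_block: "B \<in> T1.cut_blocks (snd ` D)"
  using B T1.yield_eq_cut_blocks[OF D] by simp

private lemma DE_arcs: "D \<union> E \<subseteq> arcs T1"
  using D E unfolding optimal_deletion_def by blast

lemma root_edge_optimal_if_child_cut:
  assumes "a \<in> {c, d}" "a \<in> snd ` E"
  shows "\<exists>e E'. fst e = lca X T1 B \<and> e \<in> E' \<and> optimal_deletion D E'"
proof -
  obtain p where "(p, a) \<in> E" using assms(2) by force
  moreover have "(lca X T1 B, a) \<in> arcs T1" using root_child_arc[OF D B children assms(1)] by blast
  ultimately have "(lca X T1 B, a) \<in> E" using T1.parent_unique DE_arcs by blast
  then show ?thesis using E by force
qed

lemma root_kept_if_straddling_equiv:
  assumes "x \<in> B" "(c, lbl T1 x) \<in> (arcs T1)\<^sup>*" "y \<in> B" "(d, lbl T1 y) \<in> (arcs T1)\<^sup>*"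
    and "T1.cut_equiv (snd ` (D \<union> E)) x y"
  shows "\<exists>B0 \<in> yield X T1 (D \<union> E). B0 \<subseteq> B \<and> (\<forall>T \<in> set Ts. lca X T B0 = lca X T B)"
proof -
  define B0 where "B0 = {z \<in> X. T1.cut_equiv (snd ` (D \<union> E)) z x}"
  have "x \<in> X" using assms(1) T1.cut_block_subset B_cut_block by blast
  then have "B0 \<in> yield X T1 (D \<union> E)"
    unfolding B0_def using T1.yield_eq_cut_blocks[OF DE_arcs] T1.cut_class_in_blocks by simp
  moreover have "B0 \<subseteq> B"
    unfolding B0_def T1.cut_block_eq[OF B_cut_block assms(1)]
    using T1.cut_equiv_anti_mono[of "snd ` D" "snd ` (D \<union> E)"] by blast
  moreover have "x \<in> B0" "y \<in> B0"
    unfolding B0_def using assms \<open>x \<in> X\<close> T1.cut_block_subset[OF B_cut_block]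
    by (auto intro: T1.cut_equiv_refl T1.cut_equiv_sym)
  ultimately show ?thesis
    using lca_straddling_subset_eq[OF af B children] assms(2,4) by blast
qed

lemma root_edge_optimal_by_exchange:
  assumes sides: "children T1 (lca X T1 B) = {s, t}" "s \<noteq> t" "s \<in> {c, d}"
    and s_uncut: "s \<notin> snd ` (D \<union> E)"
    and x0: "x0 \<in> B" "(s, lbl T1 x0) \<in> (arcs T1)\<^sup>*" and y0: "y0 \<in> B" "(t, lbl T1 y0) \<in> (arcs T1)\<^sup>*"
    and cut_off: "\<forall>x \<in> B. (s, lbl T1 x) \<in> (arcs T1)\<^sup>* \<longrightarrow> T1.cut_between (snd ` (D \<union> E)) (lca X T1 B) x"
  shows "\<exists>e E'. fst e = lca X T1 B \<and> e \<in> E' \<and> optimal_deletion D E'"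
proof -
  have "snd ` D \<subseteq> snd ` (D \<union> E)" by blast
  from T1.cut_exchange[OF sides(1,2) this B_cut_block x0 y0 cut_off]
  obtain w0 where "w0 \<in> snd ` (D \<union> E) - snd ` D"
    "\<forall>p \<in> X. \<forall>q \<in> X. T1.cut_equiv (insert s (snd ` (D \<union> E) - {w0})) p q \<longleftrightarrow>
                       T1.cut_equiv (snd ` (D \<union> E)) p q" ..
  from optimal_deletion_exchange[OF D E root_child_arc[OF D B children sides(3)] s_uncut this]
  obtain E' where "optimal_deletion D E'" "(lca X T1 B, s) \<in> E'" by blast
  then show ?thesis by (intro exI[of _ "(lca X T1 B, s)"] exI[of _ E']) simp
qed

lemma root_edge_optimal_if_separated:
  assumes uncut: "c \<notin> snd ` (D \<union> E)" "d \<notin> snd ` (D \<union> E)"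
    and separated: "\<forall>x \<in> B. \<forall>y \<in> B. (c, lbl T1 x) \<in> (arcs T1)\<^sup>* \<longrightarrow>
        (d, lbl T1 y) \<in> (arcs T1)\<^sup>* \<longrightarrow> \<not> T1.cut_equiv (snd ` (D \<union> E)) x y"
  shows "\<exists>e E'. fst e = lca X T1 B \<and> e \<in> E' \<and> optimal_deletion D E'"
proof -
  obtain x0 y0 where x0: "x0 \<in> B" "(c, lbl T1 x0) \<in> (arcs T1)\<^sup>*"
    and y0: "y0 \<in> B" "(d, lbl T1 y0) \<in> (arcs T1)\<^sup>*"
    using T1.block_meets_child[OF B_cut_block children] by blast
  have "\<forall>x \<in> B. (lca X T1 B, lbl T1 x) \<in> (arcs T1)\<^sup>*"
    using T1.lca_desc T1.cut_block_subset T1.cut_block_ne B_cut_block by blast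
  from T1.cut_between_on_one_side[OF this separated] show ?thesis
  proof
    assume "\<forall>x \<in> B. (c, lbl T1 x) \<in> (arcs T1)\<^sup>* \<longrightarrow> T1.cut_between (snd ` (D \<union> E)) (lca X T1 B) x"
    from root_edge_optimal_by_exchange[OF children _ uncut(1) x0 y0 this] show ?thesis by blast
  next
    assume "\<forall>x \<in> B. (d, lbl T1 x) \<in> (arcs T1)\<^sup>* \<longrightarrow> T1.cut_between (snd ` (D \<union> E)) (lca X T1 B) x"
    moreover have "children T1 (lca X T1 B) = {d, c}" "d \<noteq> c" using children by auto
    ultimately show ?thesis using root_edge_optimal_by_exchange[OF _ _ _ uncut(2) y0 x0] by blast
  qed
qed

lemma root_edge_optimal_or_root_kept:
  "(\<exists>e E'. fst e = lca X T1 B \<and> e \<in> E' \<and> optimal_deletion D E') \<or>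
   (\<exists>B0 \<in> yield X T1 (D \<union> E). B0 \<subseteq> B \<and> (\<forall>T \<in> set Ts. lca X T B0 = lca X T B))"
proof (cases "c \<in> snd ` E \<or> d \<in> snd ` E")
  case True
  then show ?thesis using root_edge_optimal_if_child_cut by blast
next
  case False
  then have uncut: "c \<notin> snd ` (D \<union> E)" "d \<notin> snd ` (D \<union> E)"
    using T1.root_children_uncut[OF B_cut_block children] by (auto simp: image_Un)
  show ?thesis
  proof (cases "\<exists>x \<in> B. \<exists>y \<in> B. (c, lbl T1 x) \<in> (arcs T1)\<^sup>* \<and> (d, lbl T1 y) \<in> (arcs T1)\<^sup>* \<and>
                  T1.cut_equiv (snd ` (D \<union> E)) x y")
    case True
    then obtain x y where "x \<in> B" "(c, lbl T1 x) \<in> (arcs T1)\<^sup>*" "y \<in> B" "(d, lbl T1 y) \<in> (arcs T1)\<^sup>*"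
      "T1.cut_equiv (snd ` (D \<union> E)) x y" by blast
    from root_kept_if_straddling_equiv[OF this] show ?thesis ..
  next
    case False
    then have "\<forall>x \<in> B. \<forall>y \<in> B. (c, lbl T1 x) \<in> (arcs T1)\<^sup>* \<longrightarrow>
        (d, lbl T1 y) \<in> (arcs T1)\<^sup>* \<longrightarrow> \<not> T1.cut_equiv (snd ` (D \<union> E)) x y" by blast
    from root_edge_optimal_if_separated[OF uncut this] show ?thesis ..
  qed
qed

end

lemma root_kept_unless_root_edge_optimal:
  assumes D: "D \<subseteq> arcs T1" and af: "agreement_forest X Ts (yield X T1 D)"
    and K: "K \<in> yield X T1 D" "K' \<in> yield X T1 D" "gf_arc X Ts K K'"
    and E: "optimal_deletion D E"
    and no_root_edge: "\<not> (\<exists>e E'. fst e = lca X T1 K \<and> e \<in> E' \<and> optimal_deletion D E')"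
  shows "\<exists>K0 \<in> yield X T1 (D \<union> E). K0 \<subseteq> K \<and> (\<forall>T \<in> set Ts. lca X T K0 = lca X T K)"
proof -
  obtain c d where "children T1 (lca X T1 K) = {c, d}" "c \<noteq> d"
    using gf_arc_root_children[OF af K] .
  from root_edge_optimal_or_root_kept[OF D af K(1) this E] show ?thesis
  proof
    assume "\<exists>e E'. fst e = lca X T1 K \<and> e \<in> E' \<and> optimal_deletion D E'"
    with no_root_edge show ?thesis by contradiction
  qed
qed

lemma cycle_root_edge_optimal:
  assumes D: "D \<subseteq> arcs T1" and af: "agreement_forest X Ts (yield X T1 D)"
    and B: "B \<in> yield X T1 D" "B' \<in> yield X T1 D"
    and cycle: "gf_arc X Ts B B'" "gf_arc X Ts B' B"
  shows "\<exists>e E. fst e \<in> {lca X T1 B, lca X T1 B'} \<and> e \<in> E \<and> optimal_deletion D E"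
proof (rule ccontr)
  assume none: "\<not> ?thesis"
  obtain E where E: "optimal_deletion D E" using optimal_deletion_exists[OF D] by blast
  have no_root_edge: "\<not> (\<exists>e E'. fst e = lca X T1 K \<and> e \<in> E' \<and> optimal_deletion D E')"
    if "K \<in> {B, B'}" for K
  proof
    assume "\<exists>e E'. fst e = lca X T1 K \<and> e \<in> E' \<and> optimal_deletion D E'"
    then obtain e E' where "fst e = lca X T1 K" "e \<in> E'" "optimal_deletion D E'" by blast
    moreover have "fst e \<in> {lca X T1 B, lca X T1 B'}" using that calculation(1) by auto
    ultimately show False using none by blast
  qed
  from root_kept_unless_root_edge_optimal[OF D af B cycle(1) E no_root_edge]
    root_kept_unless_root_edge_optimal[OF D af B(2,1) cycle(2) E no_root_edge]
  obtain B0 B0' where B0: "B0 \<in> yield X T1 (D \<union> E)" "B0 \<subseteq> B" "\<forall>T \<in> set Ts. lca X T B0 = lca X T B"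
    and B0': "B0' \<in> yield X T1 (D \<union> E)" "B0' \<subseteq> B'" "\<forall>T \<in> set Ts. lca X T B0' = lca X T B'"
    by blast
  have acyclic: "acyclic_af X Ts (yield X T1 (D \<union> E))" using E unfolding optimal_deletion_def by blast
  have "B \<inter> B' = {}" using agreement_forest_disjoint[OF af B] cycle(1) unfolding gf_arc_def by blast
  moreover have "B0 \<noteq> {}"
    using agreement_forest_block_ne acyclic B0(1) unfolding acyclic_af_def by blast
  ultimately have "B0 \<noteq> B0'" using B0(2) B0'(2) by blast
  then have "gf_arc X Ts B0 B0'" "gf_arc X Ts B0' B0"
    using cycle B0(3) B0'(3) unfolding gf_arc_def by auto
  then have "(B0, B0') \<in> GF X Ts (yield X T1 (D \<union> E))" "(B0', B0) \<in> GF X Ts (yield X T1 (D \<union> E))"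
    using B0(1) B0'(1) unfolding GF_def by blast+
  then have "(B0, B0) \<in> (GF X Ts (yield X T1 (D \<union> E)))\<^sup>+" by (meson trancl.simps)
  then show False using acyclic unfolding acyclic_af_def acyclic_def by blast
qed

end

theorem lemma3:
  fixes X :: "'x set" and Ts :: "('x, 'v) ptree list" and D :: "('v \<times> 'v) set"
    and B B' :: "'x set"
  assumes "length Ts \<ge> 2"
    and "\<forall>T \<in> set Ts. phylo_tree X T"
    and "D \<subseteq> arcs (hd Ts)"
    and "agreement_forest X Ts (yield X (hd Ts) D)"
    and "B \<in> yield X (hd Ts) D" and "B' \<in> yield X (hd Ts) D"
    and "gf_arc X Ts B B'" and "gf_arc X Ts B' B"
  shows "\<exists>er er'. er \<in> arcs (hd Ts) - D \<and> fst er = lca X (hd Ts) B \<and>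
                  er' \<in> arcs (hd Ts) - D \<and> fst er' = lca X (hd Ts) B' \<and>
                  (\<exists>e \<in> {er, er'}. int (ea X Ts (D \<union> {e})) = int (ea X Ts D) - 1) \<and>
                  int (ea X Ts (D \<union> {er, er'})) \<le> int (ea X Ts D) - 1"
proof -
  interpret phylo_family X Ts using assms(1,2) by unfold_locales auto
  obtain e E where e: "fst e \<in> {lca X T1 B, lca X T1 B'}" "e \<in> E" and E: "optimal_deletion D E"
    using cycle_root_edge_optimal[OF assms(3-8)] by blast
  have e_arc: "e \<in> arcs T1 - D" using E e(2) unfolding optimal_deletion_def by blast
  obtain c where c: "(lca X T1 B, c) \<in> arcs T1 - D" using gf_arc_root_arc[OF assms(3-7)] .
  obtain c' where c': "(lca X T1 B', c') \<in> arcs T1 - D" using gf_arc_root_arc[OF assms(3,4,6,5,8)] .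
  have drop: "int (ea X Ts (D \<union> {e})) = int (ea X Ts D) - 1"
    using ea_insert_optimal_edge[OF assms(3) E e(2), symmetric] by simp
  have drop_pair: "int (ea X Ts (D \<union> {e, e'})) \<le> int (ea X Ts D) - 1" if "e' \<in> arcs T1 - D" for e'
    using ea_insert_optimal_edge_and_arc[OF assms(3) E e(2) that] by linarith
  show ?thesis
  proof (cases "fst e = lca X T1 B")
    case True
    then show ?thesis
      using e_arc c' drop drop_pair[OF c'] by (intro exI[of _ e] exI[of _ "(lca X T1 B', c')"]) auto
  next
    case False
    then have "fst e = lca X T1 B'" using e(1) by simp
    moreover have "{(lca X T1 B, c), e} = {e, (lca X T1 B, c)}" by blast
    ultimately show ?thesis
      using e_arc c drop drop_pair[OF c] by (intro exI[of _ "(lca X T1 B, c)"] exI[of _ e]) auto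
  qed
qed

end
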